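(* Let $\eta\in(0,1)$ and $P_A,P_B>0$. The wideband coherent-state MAC with optimal (joint-measurement) reception has capacity region (in nats per second) equal to the set of $(R_1,R_2)$, $R_1,R_2\ge0$, with $$R_1\le\sqrt{\frac{\pi\eta P_A}{3\hbar}},\qquad R_2\le\sqrt{\frac{\pi(1-\eta)P_B}{3\hbar}},\qquad R_1+R_2\le\sqrt{\frac{\pi[\eta P_A+(1-\eta)P_B]}{3\hbar}}.$$
   Context: $g(x)=(x+1)\log(x+1)-x\log x$. Wideband model (continuum limit of frequency bins of width $\Delta=2\pi/T\to0$): Alice and Bob choose photon-number allocations $\bar n_A(\omega),\bar n_B(\omega)\ge0$ on $\omega\in(0,\infty)$ subject to $\int_0^\infty\hbar\omega\,\bar n_A(\omega)\frac{d\omega}{2\pi}\le P_A$ and $\int_0^\infty\hbar\omega\,\bar n_B(\omega)\frac{d\omega}{2\pi}\le P_B$; the transmissivity $\eta$ is frequency independent. For given allocations, the achievable set is $\{R_1\le\int_0^\infty g(\eta\bar n_A(\omega))\frac{d\omega}{2\pi},\ R_2\le\int_0^\infty g((1-\eta)\bar n_B(\omega))\frac{d\omega}{2\pi},\ R_1+R_2\le\int_0^\infty g(\eta\bar n_A(\omega)+(1-\eta)\bar n_B(\omega))\frac{d\omega}{2\pi}\}$ (the per-mode coherent-state MAC capacity region with optimal reception, integrated over frequency). The capacity region is the convex hull of the union of these sets over admissible allocations. Logarithms are natural. *)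

theory Defs
  imports "HOL-Analysis.Analysis"
begin

text \<open>Entropy of a thermal state with mean photon number x (natural logarithm).\<close>
definition g :: "real \<Rightarrow> real" where
  "g x = (x + 1) * ln (x + 1) - x * ln x"

text \<open>Integral over \<omega> \<in> (0,\<infinity>) with measure d\<omega>/(2\<pi>), for nonnegative integrands.\<close>
definition freq_int :: "(real \<Rightarrow> real) \<Rightarrow> ennreal" where
  "freq_int f = (\<integral>\<^sup>+ \<omega> \<in> {0<..}. ennreal (f \<omega> / (2 * pi)) \<partial>lborel)"

definition admissible :: "real \<Rightarrow> real \<Rightarrow> (real \<Rightarrow> real) \<Rightarrow> bool" where
  "admissible hbar P n \<longleftrightarrow>
     n \<in> borel_measurable borel \<and> (\<forall>\<omega>>0. 0 \<le> n \<omega>) \<and>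
     freq_int (\<lambda>\<omega>. hbar * \<omega> * n \<omega>) \<le> ennreal P"

definition achievable :: "real \<Rightarrow> (real \<Rightarrow> real) \<Rightarrow> (real \<Rightarrow> real) \<Rightarrow> (real \<times> real) set" where
  "achievable \<eta> nA nB = {(R1, R2). 0 \<le> R1 \<and> 0 \<le> R2 \<and>
      ennreal R1 \<le> freq_int (\<lambda>\<omega>. g (\<eta> * nA \<omega>)) \<and>
      ennreal R2 \<le> freq_int (\<lambda>\<omega>. g ((1 - \<eta>) * nB \<omega>)) \<and>
      ennreal (R1 + R2) \<le> freq_int (\<lambda>\<omega>. g (\<eta> * nA \<omega> + (1 - \<eta>) * nB \<omega>))}"

definition wideband_MAC_capacity_region ::
  "real \<Rightarrow> real \<Rightarrow> real \<Rightarrow> real \<Rightarrow> (real \<times> real) set" where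
  "wideband_MAC_capacity_region hbar \<eta> PA PB =
     convex hull (\<Union>{achievable \<eta> nA nB | nA nB. admissible hbar PA nA \<and> admissible hbar PB nB})"

end

theory Submission
  imports Defs "HOL-Probability.Distributions"
begin

text \<open>
  For every inverse temperature \<beta> > 0 the entropy g lies below its tangent lines,
  g n \<le> \<beta>\<omega> n - ln (1 - exp (-\<beta>\<omega>)), with equality at the Bose-Einstein occupation
  n = 1 / (exp (\<beta>\<omega>) - 1). Integrating over frequency (both integrals reduce to the Basel sum)
  bounds the entropy of any allocation of received power Q by pi / (12 \<beta>) + \<beta> Q / hbar, and the
  optimal \<beta> turns this into the single-user capacity sqrt (pi Q / (3 hbar)), attained by the thermal
  allocation. Applied to each sender and to their superposition, this puts every achievable pair
  into the pentagon. Conversely, let sender A use the thermal allocation of its received power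
  \<eta> PA and let sender B add the increment up to the thermal allocation of the total received
  power: by subadditivity of g this reaches the corner whose first coordinate is the capacity of
  \<eta> PA and whose sum is the capacity of the total. The other corner is symmetric, and the pentagon
  is the convex hull of the two rectangles below the corners.
\<close>

section \<open>The entropy function g\<close>

lemma g_measurable [measurable]: "g \<in> borel_measurable borel"
  unfolding g_def by measurable

lemma g_eq:
  assumes "0 < x"
  shows "g x = x * ln ((x + 1) / x) + ln (x + 1)"
  using assms by (simp add: g_def ln_div algebra_simps)

lemma g_nonneg:
  assumes "0 \<le> x"
  shows "0 \<le> g x"
proof (cases "x = 0")
  case False
  with assms show ?thesis by (simp add: g_eq)
qed (simp add: g_def)

lemma g_subadditive:
  assumes x: "0 \<le> x" and y: "0 \<le> y"
  shows "g (x + y) \<le> g x + g y"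
proof (cases "x = 0 \<or> y = 0")
  case True
  then show ?thesis using g_nonneg[OF x] g_nonneg[OF y] by auto
next
  case False
  with x y have x: "0 < x" and y: "0 < y" by auto
  have lx: "ln ((x + y + 1) / (x + y)) \<le> ln ((x + 1) / x)"
    and ly: "ln ((x + y + 1) / (x + y)) \<le> ln ((y + 1) / y)"
    using x y by (simp_all add: field_simps)
  have "ln (x + y + 1) \<le> ln ((x + 1) * (y + 1))"
    using x y by (intro ln_mono) (simp_all add: algebra_simps)
  then have l1: "ln (x + y + 1) \<le> ln (x + 1) + ln (y + 1)"
    using x y by (simp add: ln_mult)
  have "g (x + y) = x * ln ((x + y + 1) / (x + y)) + y * ln ((x + y + 1) / (x + y)) + ln (x + y + 1)"
    using x y by (simp add: g_eq algebra_simps)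
  also have "\<dots> \<le> x * ln ((x + 1) / x) + y * ln ((y + 1) / y) + (ln (x + 1) + ln (y + 1))"
    using x y lx ly l1 by (intro add_mono mult_left_mono) auto
  also have "\<dots> = g x + g y"
    using x y by (simp add: g_eq)
  finally show ?thesis .
qed

lemma g_le_affine:
  assumes x: "0 \<le> x" and c: "0 < c"
  shows "g x \<le> c * x - ln (1 - exp (- c))"
proof (cases "x = 0")
  case True
  have "ln (1 - exp (- c)) \<le> 0" using c by simp
  with True show ?thesis by (simp add: g_def)
next
  case False
  with x have x: "0 < x" by simp
  define q where "q = exp (- c)"
  have q: "0 < q" "q < 1" using c by (auto simp: q_def)
  have e1: "ln (q * (x + 1) / x) = ln ((x + 1) / x) - c"
    and e2: "ln ((1 - q) * (x + 1)) = ln (1 - q) + ln (x + 1)"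
    using x q by (simp_all add: ln_mult ln_div q_def)
  have "g x - c * x + ln (1 - q) = x * ln (q * (x + 1) / x) + ln ((1 - q) * (x + 1))"
    unfolding g_eq[OF x] e1 e2 by (simp add: algebra_simps)
  also have "\<dots> \<le> x * (q * (x + 1) / x - 1) + ((1 - q) * (x + 1) - 1)"
    using x q by (intro add_mono mult_left_mono ln_le_minus_one) auto
  also have "\<dots> = 0"
    using x by (simp add: field_simps)
  finally show ?thesis by (simp add: q_def)
qed

lemma g_bose_einstein:
  assumes c: "0 < c"
  shows "g (1 / (exp c - 1)) = c / (exp c - 1) - ln (1 - exp (- c))"
proof -
  define E where "E = exp c - 1"
  have E: "0 < E" using c by (simp add: E_def)
  have l1: "ln (1 / E + 1) = c - ln E"
    using E by (simp add: E_def field_simps ln_div)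
  have l2: "ln (1 / E) = - ln E"
    using E by (simp add: ln_div)
  have l3: "ln (1 - exp (- c)) = ln E - c"
    using E by (simp add: E_def exp_minus field_simps ln_div)
  show ?thesis
    unfolding g_def E_def[symmetric] l1 l2 l3 by (simp add: algebra_simps)
qed

section \<open>Bose-Einstein integrals\<close>

lemma nn_integral_power_times_exp_scaled:
  fixes c :: real
  assumes c: "0 < c"
  shows "(\<integral>\<^sup>+x\<in>{0<..}. ennreal (x ^ m * exp (- (c * x))) \<partial>lborel) = ennreal (fact m / c ^ Suc m)"
    (is "?I = _")
proof -
  have scaled: "ennreal ((c * x) ^ m * exp (- (c * x))) * indicator {0..} (c * x)
      = ennreal (c ^ m) * (ennreal (x ^ m * exp (- (c * x))) * indicator {0<..} x)" if "x \<noteq> 0" for x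
    using c that by (cases "0 < x") (simp_all add: power_mult_distrib ennreal_mult zero_le_mult_iff mult.assoc)
  have "ennreal (fact m) = (\<integral>\<^sup>+x. ennreal (x ^ m * exp (- x)) * indicator {0..} x \<partial>lborel)"
    using nn_intergal_power_times_exp_Ici[of m] by simp
  also have "\<dots> = ennreal c * (\<integral>\<^sup>+x. ennreal ((c * x) ^ m * exp (- (c * x))) * indicator {0..} (c * x) \<partial>lborel)"
    using nn_integral_real_affine[of "\<lambda>x. ennreal (x ^ m * exp (- x)) * indicator {0..} x" c 0] c by simp
  also have "(\<integral>\<^sup>+x. ennreal ((c * x) ^ m * exp (- (c * x))) * indicator {0..} (c * x) \<partial>lborel)
      = (\<integral>\<^sup>+x. ennreal (c ^ m) * (ennreal (x ^ m * exp (- (c * x))) * indicator {0<..} x) \<partial>lborel)"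
    using AE_lborel_singleton[of 0] by (intro nn_integral_cong_AE) (auto elim!: eventually_mono simp: scaled)
  also have "\<dots> = ennreal (c ^ m) * ?I"
    by (simp add: nn_integral_cmult)
  finally have e: "ennreal (fact m) = ennreal (c ^ Suc m) * ?I"
    using c by (simp add: ennreal_mult mult.assoc)
  have "?I = (?I * ennreal (c ^ Suc m)) / ennreal (c ^ Suc m)"
    using c by (simp add: ennreal_mult_divide_eq)
  also have "\<dots> = ennreal (fact m / c ^ Suc m)"
    unfolding mult.commute[of ?I] e[symmetric] using c by (simp add: divide_ennreal)
  finally show ?thesis .
qed

lemma nn_integral_exp_series:
  fixes k :: real
  assumes k: "0 < k" and a: "\<And>n. 0 \<le> a n"
    and f: "\<And>\<omega>. 0 < \<omega> \<Longrightarrow> (\<lambda>n. a n * (\<omega> ^ m * exp (- (real (Suc n) * k * \<omega>)))) sums f \<omega>"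
  shows "(\<integral>\<^sup>+\<omega>\<in>{0<..}. ennreal (f \<omega>) \<partial>lborel) = (\<Sum>n. ennreal (a n * fact m / (real (Suc n) * k) ^ Suc m))"
proof -
  have "(\<integral>\<^sup>+\<omega>\<in>{0<..}. ennreal (f \<omega>) \<partial>lborel)
      = (\<integral>\<^sup>+\<omega>. (\<Sum>n. ennreal (a n) * (ennreal (\<omega> ^ m * exp (- (real (Suc n) * k * \<omega>))) * indicator {0<..} \<omega>)) \<partial>lborel)"
  proof (rule nn_integral_cong)
    fix \<omega> :: real
    show "ennreal (f \<omega>) * indicator {0<..} \<omega>
        = (\<Sum>n. ennreal (a n) * (ennreal (\<omega> ^ m * exp (- (real (Suc n) * k * \<omega>))) * indicator {0<..} \<omega>))"
    proof (cases "0 < \<omega>")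
      case True
      then show ?thesis
        using suminf_ennreal_eq[OF _ f[OF True]] a by (simp add: ennreal_mult)
    qed simp
  qed
  also have "\<dots> = (\<Sum>n. ennreal (a n) * (\<integral>\<^sup>+\<omega>\<in>{0<..}. ennreal (\<omega> ^ m * exp (- (real (Suc n) * k * \<omega>))) \<partial>lborel))"
    by (simp add: nn_integral_suminf nn_integral_cmult)
  also have "\<dots> = (\<Sum>n. ennreal (a n * fact m / (real (Suc n) * k) ^ Suc m))"
    using k a by (simp add: nn_integral_power_times_exp_scaled ennreal_mult'[symmetric])
  finally show ?thesis .
qed

lemma suminf_ennreal_inverse_squares:
  assumes "0 \<le> (c::real)"
  shows "(\<Sum>n. ennreal (c / (real (Suc n))\<^sup>2)) = ennreal (c * pi\<^sup>2 / 6)"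
proof -
  have "(\<lambda>n. c / (real (Suc n))\<^sup>2) sums (c * pi\<^sup>2 / 6)"
    using sums_mult[OF inverse_squares_sums, of c] by simp
  then show ?thesis
    using assms by (intro suminf_ennreal_eq) auto
qed

lemma bose_series:
  assumes "0 < c"
  shows "(\<lambda>n. exp (- (real (Suc n) * c))) sums (1 / (exp c - 1))"
proof -
  have "(\<lambda>n. exp (- c) * exp (- c) ^ n) sums (exp (- c) * (1 / (1 - exp (- c))))"
    using assms by (intro sums_mult geometric_sums) simp
  moreover have "exp (- c) * exp (- c) ^ n = exp (- (real (Suc n) * c))" for n
    by (simp add: exp_of_nat_mult[symmetric] exp_add[symmetric] algebra_simps)
  moreover have "exp (- c) * (1 / (1 - exp (- c))) = 1 / (exp c - 1)"
    using assms by (simp add: exp_minus field_simps)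
  ultimately show ?thesis
    by simp
qed

lemma log_bose_series:
  assumes "0 < c"
  shows "(\<lambda>n. exp (- (real (Suc n) * c)) / real (Suc n)) sums (- ln (1 - exp (- c)))"
proof -
  have "(\<lambda>n. exp (- c) ^ n / real n) sums (- ln (1 - exp (- c)))"
    using sums_minus[OF ln_series'[of "- exp (- c)"]] assms by simp
  then show ?thesis
    by (subst sums_Suc_iff) (simp add: exp_of_nat_mult[symmetric] algebra_simps)
qed

lemma nn_integral_bose:
  fixes k :: real
  assumes k: "0 < k"
  shows "(\<integral>\<^sup>+\<omega>\<in>{0<..}. ennreal (\<omega> / (exp (k * \<omega>) - 1)) \<partial>lborel) = ennreal (pi\<^sup>2 / (6 * k\<^sup>2))"
proof -
  have "(\<integral>\<^sup>+\<omega>\<in>{0<..}. ennreal (\<omega> / (exp (k * \<omega>) - 1)) \<partial>lborel)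
      = (\<Sum>n. ennreal (1 * fact 1 / (real (Suc n) * k) ^ Suc 1))"
  proof (rule nn_integral_exp_series[OF k])
    show "(\<lambda>n. 1 * (\<omega> ^ 1 * exp (- (real (Suc n) * k * \<omega>)))) sums (\<omega> / (exp (k * \<omega>) - 1))"
      if "0 < \<omega>" for \<omega>
      using sums_mult[OF bose_series[of "k * \<omega>"], of \<omega>] k that by (simp add: mult.assoc)
  qed simp
  also have "\<dots> = (\<Sum>n. ennreal ((1 / k\<^sup>2) / (real (Suc n))\<^sup>2))"
    by (simp add: power2_eq_square mult_ac)
  also have "\<dots> = ennreal (pi\<^sup>2 / (6 * k\<^sup>2))"
    by (subst suminf_ennreal_inverse_squares) simp_all
  finally show ?thesis .
qed

lemma nn_integral_log_bose:
  fixes k :: real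
  assumes k: "0 < k"
  shows "(\<integral>\<^sup>+\<omega>\<in>{0<..}. ennreal (- ln (1 - exp (- (k * \<omega>)))) \<partial>lborel) = ennreal (pi\<^sup>2 / (6 * k))"
proof -
  have "(\<integral>\<^sup>+\<omega>\<in>{0<..}. ennreal (- ln (1 - exp (- (k * \<omega>)))) \<partial>lborel)
      = (\<Sum>n. ennreal (1 / real (Suc n) * fact 0 / (real (Suc n) * k) ^ Suc 0))"
  proof (rule nn_integral_exp_series[OF k])
    show "(\<lambda>n. 1 / real (Suc n) * (\<omega> ^ 0 * exp (- (real (Suc n) * k * \<omega>)))) sums (- ln (1 - exp (- (k * \<omega>))))"
      if "0 < \<omega>" for \<omega>
      using log_bose_series[of "k * \<omega>"] k that by (simp add: mult.assoc)
  qed simp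
  also have "\<dots> = (\<Sum>n. ennreal ((1 / k) / (real (Suc n))\<^sup>2))"
    by (simp add: power2_eq_square mult_ac)
  also have "\<dots> = ennreal (pi\<^sup>2 / (6 * k))"
    using k by (subst suminf_ennreal_inverse_squares) simp_all
  finally show ?thesis .
qed

lemma freq_int_eq_nn_integral:
  assumes [measurable]: "f \<in> borel_measurable borel"
  shows "freq_int f = ennreal (1 / (2 * pi)) * (\<integral>\<^sup>+\<omega>\<in>{0<..}. ennreal (f \<omega>) \<partial>lborel)"
proof -
  have "ennreal (f \<omega> / (2 * pi)) = ennreal (1 / (2 * pi)) * ennreal (f \<omega>)" for \<omega>
    by (subst ennreal_mult'[symmetric]) simp_all
  then show ?thesis
    unfolding freq_int_def by (simp add: nn_integral_cmult[symmetric] mult.assoc)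
qed

lemma freq_int_cong:
  assumes "\<And>\<omega>. 0 < \<omega> \<Longrightarrow> f \<omega> = h \<omega>"
  shows "freq_int f = freq_int h"
  unfolding freq_int_def using assms by (intro nn_integral_cong) (simp split: split_indicator)

lemma freq_int_mono:
  assumes "\<And>\<omega>. 0 < \<omega> \<Longrightarrow> f \<omega> \<le> h \<omega>"
  shows "freq_int f \<le> freq_int h"
  unfolding freq_int_def using assms
  by (intro nn_integral_mono) (auto split: split_indicator intro!: ennreal_leI divide_right_mono)

lemma freq_int_add:
  assumes [measurable]: "f \<in> borel_measurable borel" "h \<in> borel_measurable borel"
    and "\<And>\<omega>. 0 < \<omega> \<Longrightarrow> 0 \<le> f \<omega>" "\<And>\<omega>. 0 < \<omega> \<Longrightarrow> 0 \<le> h \<omega>"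
  shows "freq_int (\<lambda>\<omega>. f \<omega> + h \<omega>) = freq_int f + freq_int h"
proof -
  have "freq_int (\<lambda>\<omega>. f \<omega> + h \<omega>)
      = (\<integral>\<^sup>+\<omega>. ennreal (f \<omega> / (2 * pi)) * indicator {0<..} \<omega> + ennreal (h \<omega> / (2 * pi)) * indicator {0<..} \<omega> \<partial>lborel)"
    unfolding freq_int_def using assms(3,4)
    by (intro nn_integral_cong) (simp split: split_indicator add: add_divide_distrib)
  also have "\<dots> = freq_int f + freq_int h"
    unfolding freq_int_def by (rule nn_integral_add) simp_all
  finally show ?thesis .
qed

lemma freq_int_cmult:
  assumes [measurable]: "f \<in> borel_measurable borel" and "0 \<le> c"
  shows "freq_int (\<lambda>\<omega>. c * f \<omega>) = ennreal c * freq_int f"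
proof -
  have "ennreal (c * f \<omega> / (2 * pi)) = ennreal c * ennreal (f \<omega> / (2 * pi))" for \<omega>
    using assms by (simp add: ennreal_mult'[symmetric])
  then show ?thesis
    unfolding freq_int_def by (simp add: nn_integral_cmult[symmetric] mult.assoc)
qed

lemma freq_int_bose:
  assumes "0 < k"
  shows "freq_int (\<lambda>\<omega>. \<omega> / (exp (k * \<omega>) - 1)) = ennreal (pi / (12 * k\<^sup>2))"
  using assms by (simp add: freq_int_eq_nn_integral nn_integral_bose ennreal_mult'[symmetric] power2_eq_square)

lemma freq_int_log_bose:
  assumes "0 < k"
  shows "freq_int (\<lambda>\<omega>. - ln (1 - exp (- (k * \<omega>)))) = ennreal (pi / (12 * k))"
  using assms by (simp add: freq_int_eq_nn_integral nn_integral_log_bose ennreal_mult'[symmetric] power2_eq_square)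

section \<open>Thermal allocations and the single-user capacity\<close>

definition thermal :: "real \<Rightarrow> real \<Rightarrow> real" where
  "thermal \<beta> \<omega> = 1 / (exp (\<beta> * \<omega>) - 1)"

lemma thermal_measurable [measurable]: "thermal \<beta> \<in> borel_measurable borel"
  unfolding thermal_def by measurable

lemma thermal_pos: "0 < \<beta> \<Longrightarrow> 0 < \<omega> \<Longrightarrow> 0 < thermal \<beta> \<omega>"
  unfolding thermal_def by simp

lemma thermal_antimono:
  assumes "0 < \<beta>'" "\<beta>' \<le> \<beta>" "0 < \<omega>"
  shows "thermal \<beta> \<omega> \<le> thermal \<beta>' \<omega>"
  unfolding thermal_def using assms by (intro divide_left_mono diff_right_mono) (simp_all add: mult_pos_pos)

lemma freq_int_thermal_power:
  assumes "0 < \<beta>" "0 \<le> hbar"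
  shows "freq_int (\<lambda>\<omega>. hbar * \<omega> * thermal \<beta> \<omega>) = ennreal (hbar * pi / (12 * \<beta>\<^sup>2))"
proof -
  have "freq_int (\<lambda>\<omega>. hbar * \<omega> * thermal \<beta> \<omega>) = freq_int (\<lambda>\<omega>. hbar * (\<omega> / (exp (\<beta> * \<omega>) - 1)))"
    by (simp add: thermal_def)
  also have "\<dots> = ennreal hbar * ennreal (pi / (12 * \<beta>\<^sup>2))"
    using assms by (subst freq_int_cmult) (simp_all add: freq_int_bose)
  finally show ?thesis
    using assms by (simp add: ennreal_mult'[symmetric])
qed

lemma freq_int_thermal_entropy:
  assumes \<beta>: "0 < \<beta>"
  shows "freq_int (\<lambda>\<omega>. g (thermal \<beta> \<omega>)) = ennreal (pi / (6 * \<beta>))"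
proof -
  have "freq_int (\<lambda>\<omega>. g (thermal \<beta> \<omega>))
      = freq_int (\<lambda>\<omega>. - ln (1 - exp (- (\<beta> * \<omega>))) + \<beta> * (\<omega> / (exp (\<beta> * \<omega>) - 1)))"
    using \<beta> by (intro freq_int_cong) (simp add: thermal_def g_bose_einstein)
  also have "\<dots> = freq_int (\<lambda>\<omega>. - ln (1 - exp (- (\<beta> * \<omega>)))) + freq_int (\<lambda>\<omega>. \<beta> * (\<omega> / (exp (\<beta> * \<omega>) - 1)))"
    using \<beta> by (intro freq_int_add) auto
  also have "\<dots> = ennreal (pi / (12 * \<beta>)) + ennreal \<beta> * ennreal (pi / (12 * \<beta>\<^sup>2))"
    using \<beta> by (subst freq_int_cmult) (simp_all add: freq_int_bose freq_int_log_bose)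
  also have "\<dots> = ennreal (pi / (6 * \<beta>))"
    using \<beta> by (simp add: ennreal_mult'[symmetric] ennreal_plus[symmetric] power2_eq_square field_simps del: ennreal_plus)
  finally show ?thesis .
qed

lemma freq_int_g_le:
  assumes hbar: "0 < hbar" and \<beta>: "0 < \<beta>" and P: "0 \<le> P"
    and [measurable]: "n \<in> borel_measurable borel" and n: "\<And>\<omega>. 0 < \<omega> \<Longrightarrow> 0 \<le> n \<omega>"
    and power: "freq_int (\<lambda>\<omega>. hbar * \<omega> * n \<omega>) \<le> ennreal P"
  shows "freq_int (\<lambda>\<omega>. g (n \<omega>)) \<le> ennreal (pi / (12 * \<beta>) + \<beta> / hbar * P)"
proof -
  have "g (n \<omega>) \<le> - ln (1 - exp (- (\<beta> * \<omega>))) + \<beta> / hbar * (hbar * \<omega> * n \<omega>)" if "0 < \<omega>" for \<omega>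
    using g_le_affine[OF n[OF that], of "\<beta> * \<omega>"] \<beta> hbar that by simp
  then have "freq_int (\<lambda>\<omega>. g (n \<omega>))
      \<le> freq_int (\<lambda>\<omega>. - ln (1 - exp (- (\<beta> * \<omega>))) + \<beta> / hbar * (hbar * \<omega> * n \<omega>))"
    by (rule freq_int_mono)
  also have "\<dots> = freq_int (\<lambda>\<omega>. - ln (1 - exp (- (\<beta> * \<omega>)))) + freq_int (\<lambda>\<omega>. \<beta> / hbar * (hbar * \<omega> * n \<omega>))"
    using hbar \<beta> n by (intro freq_int_add) auto
  also have "\<dots> = ennreal (pi / (12 * \<beta>)) + ennreal (\<beta> / hbar) * freq_int (\<lambda>\<omega>. hbar * \<omega> * n \<omega>)"
    using hbar \<beta> by (subst freq_int_cmult) (simp_all add: freq_int_log_bose)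
  also have "\<dots> \<le> ennreal (pi / (12 * \<beta>)) + ennreal (\<beta> / hbar) * ennreal P"
    using power by (intro add_left_mono mult_left_mono) simp_all
  also have "\<dots> = ennreal (pi / (12 * \<beta>) + \<beta> / hbar * P)"
    using hbar \<beta> P by (simp add: ennreal_mult'[symmetric] ennreal_plus[symmetric] del: ennreal_plus)
  finally show ?thesis .
qed

definition capacity :: "real \<Rightarrow> real \<Rightarrow> real" where
  "capacity hbar P = sqrt (pi * P / (3 * hbar))"

definition thermal_beta :: "real \<Rightarrow> real \<Rightarrow> real" where
  "thermal_beta hbar P = sqrt (hbar * pi / (12 * P))"

lemma thermal_beta_pos: "0 < hbar \<Longrightarrow> 0 < P \<Longrightarrow> 0 < thermal_beta hbar P"
  unfolding thermal_beta_def by simp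

lemma thermal_beta_antimono:
  "0 < hbar \<Longrightarrow> 0 < P \<Longrightarrow> P \<le> P' \<Longrightarrow> thermal_beta hbar P' \<le> thermal_beta hbar P"
  unfolding thermal_beta_def by (intro real_sqrt_le_mono divide_left_mono) auto

lemma thermal_beta_squared: "0 < hbar \<Longrightarrow> 0 < P \<Longrightarrow> (thermal_beta hbar P)\<^sup>2 = hbar * pi / (12 * P)"
  unfolding thermal_beta_def by simp

lemma capacity_eq_thermal_beta:
  assumes "0 < hbar" "0 < P"
  shows "capacity hbar P = pi / (6 * thermal_beta hbar P)"
  unfolding capacity_def
proof (rule real_sqrt_unique)
  have "(pi / (6 * thermal_beta hbar P))\<^sup>2 = pi\<^sup>2 / (36 * (thermal_beta hbar P)\<^sup>2)"
    by (simp add: power_divide power_mult_distrib)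
  also have "\<dots> = pi * P / (3 * hbar)"
    unfolding thermal_beta_squared[OF assms] using assms by (simp add: power2_eq_square field_simps)
  finally show "(pi / (6 * thermal_beta hbar P))\<^sup>2 = pi * P / (3 * hbar)" .
qed (use thermal_beta_pos[OF assms] in simp)

lemma capacity_optimal_beta:
  assumes "0 < hbar" "0 < P"
  shows "pi / (12 * thermal_beta hbar P) + thermal_beta hbar P / hbar * P = capacity hbar P"
proof -
  have "thermal_beta hbar P / hbar * P = (thermal_beta hbar P)\<^sup>2 * P / (hbar * thermal_beta hbar P)"
    using assms thermal_beta_pos[OF assms] by (simp add: power2_eq_square)
  also have "\<dots> = pi / (12 * thermal_beta hbar P)"
    using assms thermal_beta_pos[OF assms] by (simp add: thermal_beta_squared field_simps)
  finally show ?thesis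
    using assms by (simp add: capacity_eq_thermal_beta)
qed

lemma capacity_nonneg: "0 < hbar \<Longrightarrow> 0 \<le> P \<Longrightarrow> 0 \<le> capacity hbar P"
  unfolding capacity_def by simp

lemma capacity_mono: "0 < hbar \<Longrightarrow> P \<le> P' \<Longrightarrow> capacity hbar P \<le> capacity hbar P'"
  unfolding capacity_def by (intro real_sqrt_le_mono divide_right_mono mult_left_mono) auto

lemma capacity_subadditive:
  assumes "0 < hbar" "0 \<le> P" "0 \<le> P'"
  shows "capacity hbar (P + P') \<le> capacity hbar P + capacity hbar P'"
  unfolding capacity_def using assms
  by (simp add: distrib_left add_divide_distrib sqrt_add_le_add_sqrt)

lemma freq_int_thermal_beta_power:
  assumes "0 < hbar" "0 < P"
  shows "freq_int (\<lambda>\<omega>. hbar * \<omega> * thermal (thermal_beta hbar P) \<omega>) = ennreal P"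
  using assms by (simp add: freq_int_thermal_power thermal_beta_pos thermal_beta_squared)

lemma freq_int_thermal_beta_entropy:
  assumes "0 < hbar" "0 < P"
  shows "freq_int (\<lambda>\<omega>. g (thermal (thermal_beta hbar P) \<omega>)) = ennreal (capacity hbar P)"
  using assms by (simp add: freq_int_thermal_entropy thermal_beta_pos capacity_eq_thermal_beta)

lemma freq_int_g_le_capacity:
  assumes "0 < hbar" "0 < P"
    and "n \<in> borel_measurable borel" "\<And>\<omega>. 0 < \<omega> \<Longrightarrow> 0 \<le> n \<omega>"
    and "freq_int (\<lambda>\<omega>. hbar * \<omega> * n \<omega>) \<le> ennreal P"
  shows "freq_int (\<lambda>\<omega>. g (n \<omega>)) \<le> ennreal (capacity hbar P)"
proof -
  have "freq_int (\<lambda>\<omega>. g (n \<omega>)) \<le> ennreal (pi / (12 * thermal_beta hbar P) + thermal_beta hbar P / hbar * P)"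
    using assms thermal_beta_pos[OF assms(1,2)] by (intro freq_int_g_le) auto
  then show ?thesis
    by (simp only: capacity_optimal_beta[OF assms(1,2)])
qed

section \<open>The two-user rate region\<close>

lemma thermal_increment:
  assumes hbar: "0 < hbar" and P: "0 < P" and P': "0 < P'"
  defines "N \<equiv> thermal (thermal_beta hbar P)" and "N' \<equiv> thermal (thermal_beta hbar (P + P'))"
  shows "\<And>\<omega>. 0 < \<omega> \<Longrightarrow> N \<omega> \<le> N' \<omega>"
    and "freq_int (\<lambda>\<omega>. hbar * \<omega> * (N' \<omega> - N \<omega>)) = ennreal P'"
    and "ennreal (capacity hbar (P + P') - capacity hbar P) \<le> freq_int (\<lambda>\<omega>. g (N' \<omega> - N \<omega>))"
proof -
  have PP': "0 < P + P'" using P P' by simp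
  have N_nonneg: "0 \<le> N \<omega>" if "0 < \<omega>" for \<omega>
    unfolding N_def using thermal_pos[OF thermal_beta_pos[OF hbar P] that] by simp
  show mono: "N \<omega> \<le> N' \<omega>" if "0 < \<omega>" for \<omega>
    unfolding N_def N'_def using hbar P P' that
    by (intro thermal_antimono thermal_beta_antimono thermal_beta_pos) simp_all
  have "ennreal (P + P') = freq_int (\<lambda>\<omega>. hbar * \<omega> * N \<omega> + hbar * \<omega> * (N' \<omega> - N \<omega>))"
    unfolding N'_def using freq_int_thermal_beta_power[OF hbar PP']
    by (simp add: algebra_simps N_def)
  also have "\<dots> = ennreal P + freq_int (\<lambda>\<omega>. hbar * \<omega> * (N' \<omega> - N \<omega>))"
    using hbar N_nonneg mono
    by (subst freq_int_add) (simp_all add: N_def N'_def freq_int_thermal_beta_power[OF hbar P])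
  finally show "freq_int (\<lambda>\<omega>. hbar * \<omega> * (N' \<omega> - N \<omega>)) = ennreal P'"
    using P P' by (simp add: ennreal_add_left_cancel)
  have "g (N' \<omega>) \<le> g (N \<omega>) + g (N' \<omega> - N \<omega>)" if "0 < \<omega>" for \<omega>
    using g_subadditive[of "N \<omega>" "N' \<omega> - N \<omega>"] N_nonneg[OF that] mono[OF that] by simp
  then have "ennreal (capacity hbar (P + P')) \<le> freq_int (\<lambda>\<omega>. g (N \<omega>) + g (N' \<omega> - N \<omega>))"
    unfolding freq_int_thermal_beta_entropy[OF hbar PP', symmetric] N'_def[symmetric]
    by (rule freq_int_mono)
  also have "\<dots> = ennreal (capacity hbar P) + freq_int (\<lambda>\<omega>. g (N' \<omega> - N \<omega>))"
    using N_nonneg mono g_nonneg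
    by (subst freq_int_add) (simp_all add: N_def N'_def freq_int_thermal_beta_entropy[OF hbar P])
  finally show "ennreal (capacity hbar (P + P') - capacity hbar P) \<le> freq_int (\<lambda>\<omega>. g (N' \<omega> - N \<omega>))"
    using capacity_nonneg[OF hbar, of P] P by (simp add: ennreal_minus[symmetric] ennreal_minus_le_iff)
qed

lemma admissible_divide:
  assumes hbar: "0 < hbar" and \<gamma>: "0 < \<gamma>"
    and [measurable]: "N \<in> borel_measurable borel" and N: "\<And>\<omega>. 0 < \<omega> \<Longrightarrow> 0 \<le> N \<omega>"
    and power: "freq_int (\<lambda>\<omega>. hbar * \<omega> * N \<omega>) = ennreal (\<gamma> * P)"
  shows "admissible hbar P (\<lambda>\<omega>. N \<omega> / \<gamma>)"
proof -
  have "freq_int (\<lambda>\<omega>. hbar * \<omega> * (N \<omega> / \<gamma>)) = freq_int (\<lambda>\<omega>. 1 / \<gamma> * (hbar * \<omega> * N \<omega>))"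
    by simp
  also have "\<dots> = ennreal (1 / \<gamma>) * ennreal (\<gamma> * P)"
    using \<gamma> by (subst freq_int_cmult) (simp_all add: power)
  also have "\<dots> = ennreal P"
    using \<gamma> by (simp add: ennreal_mult'[symmetric])
  finally show ?thesis
    unfolding admissible_def using N \<gamma> by simp
qed

lemma corner_allocation:
  assumes hbar: "0 < hbar" and \<gamma>: "0 < \<gamma>" and \<gamma>': "0 < \<gamma>'" and P: "0 < P" and P': "0 < P'"
  obtains n n' where "admissible hbar P n" and "admissible hbar P' n'"
    and "ennreal (capacity hbar (\<gamma> * P)) \<le> freq_int (\<lambda>\<omega>. g (\<gamma> * n \<omega>))"
    and "ennreal (capacity hbar (\<gamma> * P + \<gamma>' * P') - capacity hbar (\<gamma> * P)) \<le> freq_int (\<lambda>\<omega>. g (\<gamma>' * n' \<omega>))"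
    and "ennreal (capacity hbar (\<gamma> * P + \<gamma>' * P')) \<le> freq_int (\<lambda>\<omega>. g (\<gamma> * n \<omega> + \<gamma>' * n' \<omega>))"
proof -
  have Q: "0 < \<gamma> * P" and Q': "0 < \<gamma>' * P'" using \<gamma> \<gamma>' P P' by simp_all
  define N where "N = thermal (thermal_beta hbar (\<gamma> * P))"
  define N' where "N' = thermal (thermal_beta hbar (\<gamma> * P + \<gamma>' * P'))"
  note increment = thermal_increment[OF hbar Q Q', folded N_def N'_def]
  have N_nonneg: "0 \<le> N \<omega>" if "0 < \<omega>" for \<omega>
    unfolding N_def using thermal_pos[OF thermal_beta_pos[OF hbar Q] that] by simp
  show thesis
  proof (rule that[of "\<lambda>\<omega>. N \<omega> / \<gamma>" "\<lambda>\<omega>. (N' \<omega> - N \<omega>) / \<gamma>'"])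
    show "admissible hbar P (\<lambda>\<omega>. N \<omega> / \<gamma>)"
      using N_nonneg freq_int_thermal_beta_power[OF hbar Q]
      by (intro admissible_divide[OF hbar \<gamma>]) (simp_all add: N_def)
    show "admissible hbar P' (\<lambda>\<omega>. (N' \<omega> - N \<omega>) / \<gamma>')"
      using increment(1,2) by (intro admissible_divide[OF hbar \<gamma>']) (simp_all add: N_def N'_def)
    show "ennreal (capacity hbar (\<gamma> * P)) \<le> freq_int (\<lambda>\<omega>. g (\<gamma> * (N \<omega> / \<gamma>)))"
      using \<gamma> by (simp add: N_def freq_int_thermal_beta_entropy[OF hbar Q])
    show "ennreal (capacity hbar (\<gamma> * P + \<gamma>' * P') - capacity hbar (\<gamma> * P))
        \<le> freq_int (\<lambda>\<omega>. g (\<gamma>' * ((N' \<omega> - N \<omega>) / \<gamma>')))"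
      using \<gamma>' increment(3) by simp
    show "ennreal (capacity hbar (\<gamma> * P + \<gamma>' * P'))
        \<le> freq_int (\<lambda>\<omega>. g (\<gamma> * (N \<omega> / \<gamma>) + \<gamma>' * ((N' \<omega> - N \<omega>) / \<gamma>')))"
      using \<gamma> \<gamma>' Q Q' by (simp add: N'_def freq_int_thermal_beta_entropy[OF hbar])
  qed
qed

lemma freq_int_received_power_le:
  assumes "admissible hbar P n" and "0 \<le> \<gamma>"
  shows "freq_int (\<lambda>\<omega>. hbar * \<omega> * (\<gamma> * n \<omega>)) \<le> ennreal (\<gamma> * P)"
proof -
  have [measurable]: "n \<in> borel_measurable borel"
    and power: "freq_int (\<lambda>\<omega>. hbar * \<omega> * n \<omega>) \<le> ennreal P"
    using assms(1) by (simp_all add: admissible_def)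
  have "freq_int (\<lambda>\<omega>. hbar * \<omega> * (\<gamma> * n \<omega>)) = ennreal \<gamma> * freq_int (\<lambda>\<omega>. hbar * \<omega> * n \<omega>)"
    using assms(2) by (subst freq_int_cmult[symmetric]) (simp_all add: algebra_simps)
  also have "\<dots> \<le> ennreal (\<gamma> * P)"
    using power assms(2) by (simp add: ennreal_mult' mult_left_mono)
  finally show ?thesis .
qed

definition achievable_rates :: "real \<Rightarrow> real \<Rightarrow> real \<Rightarrow> real \<Rightarrow> (real \<times> real) set" where
  "achievable_rates hbar \<eta> PA PB =
     \<Union>{achievable \<eta> nA nB | nA nB. admissible hbar PA nA \<and> admissible hbar PB nB}"

definition rate_pentagon :: "real \<Rightarrow> real \<Rightarrow> real \<Rightarrow> (real \<times> real) set" where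
  "rate_pentagon a b s = {(R1, R2). 0 \<le> R1 \<and> 0 \<le> R2 \<and> R1 \<le> a \<and> R2 \<le> b \<and> R1 + R2 \<le> s}"

lemma achievable_rates_subset_rate_pentagon:
  assumes hbar: "0 < hbar" and \<eta>: "0 < \<eta>" "\<eta> < 1" and PA: "0 < PA" and PB: "0 < PB"
  shows "achievable_rates hbar \<eta> PA PB \<subseteq> rate_pentagon
    (capacity hbar (\<eta> * PA)) (capacity hbar ((1 - \<eta>) * PB)) (capacity hbar (\<eta> * PA + (1 - \<eta>) * PB))"
proof clarify
  fix R1 R2 assume "(R1, R2) \<in> achievable_rates hbar \<eta> PA PB"
  then obtain nA nB where adA: "admissible hbar PA nA" and adB: "admissible hbar PB nB"
    and R: "(R1, R2) \<in> achievable \<eta> nA nB"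
    unfolding achievable_rates_def by blast
  have [measurable]: "nA \<in> borel_measurable borel" "nB \<in> borel_measurable borel"
    and nA: "\<And>\<omega>. 0 < \<omega> \<Longrightarrow> 0 \<le> nA \<omega>" and nB: "\<And>\<omega>. 0 < \<omega> \<Longrightarrow> 0 \<le> nB \<omega>"
    using adA adB by (simp_all add: admissible_def)
  have QA: "0 < \<eta> * PA" and QB: "0 < (1 - \<eta>) * PB"
    using \<eta> PA PB by simp_all
  have powA: "freq_int (\<lambda>\<omega>. hbar * \<omega> * (\<eta> * nA \<omega>)) \<le> ennreal (\<eta> * PA)"
    and powB: "freq_int (\<lambda>\<omega>. hbar * \<omega> * ((1 - \<eta>) * nB \<omega>)) \<le> ennreal ((1 - \<eta>) * PB)"
    using \<eta> by (simp_all add: freq_int_received_power_le[OF adA] freq_int_received_power_le[OF adB])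
  have "freq_int (\<lambda>\<omega>. hbar * \<omega> * (\<eta> * nA \<omega> + (1 - \<eta>) * nB \<omega>))
      = freq_int (\<lambda>\<omega>. hbar * \<omega> * (\<eta> * nA \<omega>)) + freq_int (\<lambda>\<omega>. hbar * \<omega> * ((1 - \<eta>) * nB \<omega>))"
    using hbar \<eta> nA nB by (subst freq_int_add[symmetric]) (auto simp: distrib_left intro!: mult_nonneg_nonneg)
  also have "\<dots> \<le> ennreal (\<eta> * PA + (1 - \<eta>) * PB)"
    using add_mono[OF powA powB] QA QB by simp
  finally have powAB: "freq_int (\<lambda>\<omega>. hbar * \<omega> * (\<eta> * nA \<omega> + (1 - \<eta>) * nB \<omega>))
      \<le> ennreal (\<eta> * PA + (1 - \<eta>) * PB)" .
  have "freq_int (\<lambda>\<omega>. g (\<eta> * nA \<omega>)) \<le> ennreal (capacity hbar (\<eta> * PA))"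
    using \<eta> nA by (intro freq_int_g_le_capacity[OF hbar QA _ _ powA]) simp_all
  moreover have "freq_int (\<lambda>\<omega>. g ((1 - \<eta>) * nB \<omega>)) \<le> ennreal (capacity hbar ((1 - \<eta>) * PB))"
    using \<eta> nB by (intro freq_int_g_le_capacity[OF hbar QB _ _ powB]) simp_all
  moreover have "freq_int (\<lambda>\<omega>. g (\<eta> * nA \<omega> + (1 - \<eta>) * nB \<omega>))
      \<le> ennreal (capacity hbar (\<eta> * PA + (1 - \<eta>) * PB))"
    using \<eta> nA nB QA QB by (intro freq_int_g_le_capacity[OF hbar _ _ _ powAB]) simp_all
  ultimately show "(R1, R2) \<in> rate_pentagon
    (capacity hbar (\<eta> * PA)) (capacity hbar ((1 - \<eta>) * PB)) (capacity hbar (\<eta> * PA + (1 - \<eta>) * PB))"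
    using R QA QB hbar unfolding achievable_def rate_pentagon_def
    by (auto simp: capacity_nonneg simp flip: ennreal_le_iff ennreal_plus dest: order_trans)
qed

lemma rectangle_subset_achievable:
  assumes "ennreal X \<le> freq_int (\<lambda>\<omega>. g (\<eta> * nA \<omega>))"
    and "ennreal Y \<le> freq_int (\<lambda>\<omega>. g ((1 - \<eta>) * nB \<omega>))"
    and "ennreal (X + Y) \<le> freq_int (\<lambda>\<omega>. g (\<eta> * nA \<omega> + (1 - \<eta>) * nB \<omega>))"
  shows "{(x, y). 0 \<le> x \<and> x \<le> X \<and> 0 \<le> y \<and> y \<le> Y} \<subseteq> achievable \<eta> nA nB"
proof clarify
  fix x y :: real assume "0 \<le> x" "x \<le> X" "0 \<le> y" "y \<le> Y"
  then have "ennreal x \<le> ennreal X" "ennreal y \<le> ennreal Y" "ennreal (x + y) \<le> ennreal (X + Y)"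
    by (simp_all add: ennreal_leI del: ennreal_plus)
  with assms \<open>0 \<le> x\<close> \<open>0 \<le> y\<close> show "(x, y) \<in> achievable \<eta> nA nB"
    unfolding achievable_def by (blast intro: order_trans)
qed

lemma corner_rectangles_subset_achievable_rates:
  assumes hbar: "0 < hbar" and \<eta>: "0 < \<eta>" "\<eta> < 1" and PA: "0 < PA" and PB: "0 < PB"
  defines "a \<equiv> capacity hbar (\<eta> * PA)" and "b \<equiv> capacity hbar ((1 - \<eta>) * PB)"
    and "s \<equiv> capacity hbar (\<eta> * PA + (1 - \<eta>) * PB)"
  shows "{(x, y). 0 \<le> x \<and> x \<le> a \<and> 0 \<le> y \<and> y \<le> s - a} \<subseteq> achievable_rates hbar \<eta> PA PB"
    and "{(x, y). 0 \<le> x \<and> x \<le> s - b \<and> 0 \<le> y \<and> y \<le> b} \<subseteq> achievable_rates hbar \<eta> PA PB"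
proof -
  have \<eta>': "0 < 1 - \<eta>" using \<eta> by simp
  obtain nA nB where adm: "admissible hbar PA nA" "admissible hbar PB nB"
    and "ennreal (capacity hbar (\<eta> * PA)) \<le> freq_int (\<lambda>\<omega>. g (\<eta> * nA \<omega>))"
    and "ennreal (capacity hbar (\<eta> * PA + (1 - \<eta>) * PB) - capacity hbar (\<eta> * PA))
      \<le> freq_int (\<lambda>\<omega>. g ((1 - \<eta>) * nB \<omega>))"
    and "ennreal (capacity hbar (\<eta> * PA + (1 - \<eta>) * PB))
      \<le> freq_int (\<lambda>\<omega>. g (\<eta> * nA \<omega> + (1 - \<eta>) * nB \<omega>))"
    by (rule corner_allocation[OF hbar \<eta>(1) \<eta>' PA PB])
  then have "{(x, y). 0 \<le> x \<and> x \<le> a \<and> 0 \<le> y \<and> y \<le> s - a} \<subseteq> achievable \<eta> nA nB"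
    unfolding a_def s_def by (intro rectangle_subset_achievable) simp_all
  with adm show "{(x, y). 0 \<le> x \<and> x \<le> a \<and> 0 \<le> y \<and> y \<le> s - a} \<subseteq> achievable_rates hbar \<eta> PA PB"
    unfolding achievable_rates_def by blast
  obtain nB nA where adm: "admissible hbar PB nB" "admissible hbar PA nA"
    and "ennreal (capacity hbar ((1 - \<eta>) * PB)) \<le> freq_int (\<lambda>\<omega>. g ((1 - \<eta>) * nB \<omega>))"
    and "ennreal (capacity hbar ((1 - \<eta>) * PB + \<eta> * PA) - capacity hbar ((1 - \<eta>) * PB))
      \<le> freq_int (\<lambda>\<omega>. g (\<eta> * nA \<omega>))"
    and "ennreal (capacity hbar ((1 - \<eta>) * PB + \<eta> * PA))
      \<le> freq_int (\<lambda>\<omega>. g ((1 - \<eta>) * nB \<omega> + \<eta> * nA \<omega>))"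
    by (rule corner_allocation[OF hbar \<eta>' \<eta>(1) PB PA])
  then have "{(x, y). 0 \<le> x \<and> x \<le> s - b \<and> 0 \<le> y \<and> y \<le> b} \<subseteq> achievable \<eta> nA nB"
    unfolding b_def s_def by (intro rectangle_subset_achievable) (simp_all add: add.commute)
  with adm show "{(x, y). 0 \<le> x \<and> x \<le> s - b \<and> 0 \<le> y \<and> y \<le> b} \<subseteq> achievable_rates hbar \<eta> PA PB"
    unfolding achievable_rates_def by blast
qed

lemma convex_rate_pentagon: "convex (rate_pentagon a b s)"
proof (rule convexI, clarify)
  fix x y x' y' u v :: real
  assume "(x, y) \<in> rate_pentagon a b s" "(x', y') \<in> rate_pentagon a b s" and uv: "0 \<le> u" "0 \<le> v" "u + v = 1"
  then have "0 \<le> u * x + v * x'" "0 \<le> u * y + v * y'" "u * x + v * x' \<le> a" "u * y + v * y' \<le> b"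
    and "u * (x + y) + v * (x' + y') \<le> s"
    unfolding rate_pentagon_def by (auto intro: convex_bound_le)
  then show "u *\<^sub>R (x, y) + v *\<^sub>R (x', y') \<in> rate_pentagon a b s"
    unfolding rate_pentagon_def by (simp add: distrib_left)
qed

lemma rate_pentagon_subset_convex_hull:
  fixes a b s :: real
  assumes "0 \<le> a" "0 \<le> b" "a \<le> s" "b \<le> s" "s \<le> a + b"
    and rect_a: "{(x, y). 0 \<le> x \<and> x \<le> a \<and> 0 \<le> y \<and> y \<le> s - a} \<subseteq> U"
    and rect_b: "{(x, y). 0 \<le> x \<and> x \<le> s - b \<and> 0 \<le> y \<and> y \<le> b} \<subseteq> U"
  shows "rate_pentagon a b s \<subseteq> convex hull U"
proof clarify
  fix x y assume "(x, y) \<in> rate_pentagon a b s"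
  then have xy: "0 \<le> x" "0 \<le> y" "x \<le> a" "y \<le> b" "x + y \<le> s"
    unfolding rate_pentagon_def by simp_all
  show "(x, y) \<in> convex hull U"
  proof (cases "y \<le> s - a \<or> x \<le> s - b")
    case True
    then have "(x, y) \<in> U" using xy rect_a rect_b by auto
    then show ?thesis by (rule hull_inc)
  next
    case False
    define u v where "u = x - (s - b)" and "v = y - (s - a)"
    have u: "0 < u" and v: "0 < v" and uv: "u + v \<le> a + b - s"
      using False xy by (simp_all add: u_def v_def)
    define t where "t = u / (u + v)"
    have t: "0 \<le> t" "t \<le> 1" "t * (u + v) = u" "(1 - t) * (u + v) = v"
      using u v by (simp_all add: t_def field_simps)
    have "(s - b + (u + v), s - a) \<in> convex hull U" and "(s - b, s - a + (u + v)) \<in> convex hull U"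
      using assms u v uv by (auto intro!: hull_inc)
    then have "t *\<^sub>R (s - b + (u + v), s - a) + (1 - t) *\<^sub>R (s - b, s - a + (u + v)) \<in> convex hull U"
      using t by (intro convexD[OF convex_convex_hull]) simp_all
    also have "t *\<^sub>R (s - b + (u + v), s - a) + (1 - t) *\<^sub>R (s - b, s - a + (u + v))
        = (s - b + t * (u + v), s - a + (1 - t) * (u + v))"
      by (simp add: algebra_simps)
    also have "\<dots> = (x, y)"
      using t by (simp add: u_def v_def)
    finally show ?thesis .
  qed
qed

theorem mainTheorem7:
  fixes hbar \<eta> PA PB :: real
  assumes "0 < hbar" and "0 < \<eta>" and "\<eta> < 1" and "0 < PA" and "0 < PB"
  shows "wideband_MAC_capacity_region hbar \<eta> PA PB =
    {(R1, R2). 0 \<le> R1 \<and> 0 \<le> R2 \<and>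
       R1 \<le> sqrt (pi * \<eta> * PA / (3 * hbar)) \<and>
       R2 \<le> sqrt (pi * (1 - \<eta>) * PB / (3 * hbar)) \<and>
       R1 + R2 \<le> sqrt (pi * (\<eta> * PA + (1 - \<eta>) * PB) / (3 * hbar))}"
proof -
  define a where "a = capacity hbar (\<eta> * PA)"
  define b where "b = capacity hbar ((1 - \<eta>) * PB)"
  define s where "s = capacity hbar (\<eta> * PA + (1 - \<eta>) * PB)"
  have QA: "0 < \<eta> * PA" and QB: "0 < (1 - \<eta>) * PB"
    using assms by simp_all
  have "convex hull achievable_rates hbar \<eta> PA PB \<subseteq> rate_pentagon a b s"
    using achievable_rates_subset_rate_pentagon[OF assms] convex_rate_pentagon
    unfolding a_def b_def s_def by (rule hull_minimal)
  moreover have "rate_pentagon a b s \<subseteq> convex hull achievable_rates hbar \<eta> PA PB"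
  proof (rule rate_pentagon_subset_convex_hull)
    show "0 \<le> a" "0 \<le> b" "a \<le> s" "b \<le> s" "s \<le> a + b"
      using assms QA QB unfolding a_def b_def s_def
      by (simp_all add: capacity_nonneg capacity_mono capacity_subadditive)
  qed (use corner_rectangles_subset_achievable_rates[OF assms] in \<open>simp_all add: a_def b_def s_def\<close>)
  ultimately have "wideband_MAC_capacity_region hbar \<eta> PA PB = rate_pentagon a b s"
    unfolding wideband_MAC_capacity_region_def achievable_rates_def[symmetric] by (rule antisym)
  then show ?thesis
    by (simp add: rate_pentagon_def a_def b_def s_def capacity_def mult.assoc)
qed

end
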